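(* Let $T=(V,E)$ be a finite rooted tree with nonnegative partial costs, $\Pr$ a probability distribution over a finite set of queries, and $k$ a positive integer with $k\le|V|$. Let $R_g$ be the output of the greedy algorithm that starts with $R=\emptyset$ and, while $|R|<k$, adds to $R$ a node $u\in V\setminus R$ maximizing $B(R\cup\{u\})-B(R)$. Then $$B(R_g)\ge\Big(1-\frac1e\Big)\max_{R\subseteq V,\ |R|\le k}B(R).$$
   Context: $T=(V,E)$ is a finite rooted tree; $T(u)$ is the set of nodes of the subtree rooted at $u$ (including $u$); $A(u)$ the set of proper ancestors of $u$. Each non-leaf node is associated with a variable of a finite set $X$; $\mathrm{vars}(u)$ is the set of variables of nodes of $T(u)$; each query $q$ determines $Z_q\subseteq X$. For $R\subseteq V$, $w\in V$: $I_q(w,R)=1$ iff $w\in R$, $\mathrm{vars}(w)\subseteq Z_q$, and no $x\in A(w)\cap R$ has $\mathrm{vars}(x)\subseteq Z_q$; else $0$; $\mathbb{E}[I(w,R)]=\sum_q\Pr(q)I_q(w,R)$. Each node $x$ has partial cost $c(x)\ge0$, total cost $C(w)=\sum_{x\in T(w)}c(x)$. Benefit: $B(R)=\sum_{w\in R}\mathbb{E}[I(w,R)]C(w)$. *)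

theory Defs
  imports Complex_Main
begin

text \<open>A finite rooted tree on the node set V, given by a parent map:
  par v = Some p means p is the parent of v (edge p -> v); the root has no parent.\<close>

definition tree_edges :: "('v \<Rightarrow> 'v option) \<Rightarrow> 'v set \<Rightarrow> ('v \<times> 'v) set" where
  "tree_edges par V = {(p, v). v \<in> V \<and> par v = Some p}"

definition rooted_tree :: "('v \<Rightarrow> 'v option) \<Rightarrow> 'v set \<Rightarrow> 'v \<Rightarrow> bool" where
  "rooted_tree par V r \<longleftrightarrow> finite V \<and> r \<in> V \<and> par r = None
     \<and> (\<forall>v \<in> V - {r}. \<exists>p \<in> V. par v = Some p)
     \<and> (\<forall>v \<in> V. (r, v) \<in> (tree_edges par V)\<^sup>*)"

definition subtree :: "('v \<Rightarrow> 'v option) \<Rightarrow> 'v set \<Rightarrow> 'v \<Rightarrow> 'v set" where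
  "subtree par V u = {w. (u, w) \<in> (tree_edges par V)\<^sup>*}"

definition ancestors :: "('v \<Rightarrow> 'v option) \<Rightarrow> 'v set \<Rightarrow> 'v \<Rightarrow> 'v set" where
  "ancestors par V u = {x. (x, u) \<in> (tree_edges par V)\<^sup>+}"

definition is_leaf :: "('v \<Rightarrow> 'v option) \<Rightarrow> 'v set \<Rightarrow> 'v \<Rightarrow> bool" where
  "is_leaf par V w \<longleftrightarrow> (\<nexists>c. (w, c) \<in> tree_edges par V)"

text \<open>vars(u): variables of the non-leaf nodes in T(u); lab w is the variable of the
  non-leaf node w (the value of lab on leaves is irrelevant).\<close>
definition vars :: "('v \<Rightarrow> 'v option) \<Rightarrow> 'v set \<Rightarrow> ('v \<Rightarrow> 'x) \<Rightarrow> 'v \<Rightarrow> 'x set" where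
  "vars par V lab u = lab ` {w \<in> subtree par V u. \<not> is_leaf par V w}"

definition I_q :: "('v \<Rightarrow> 'v option) \<Rightarrow> 'v set \<Rightarrow> ('v \<Rightarrow> 'x) \<Rightarrow> 'x set \<Rightarrow> 'v \<Rightarrow> 'v set \<Rightarrow> real" where
  "I_q par V lab Zq w R =
     (if w \<in> R \<and> vars par V lab w \<subseteq> Zq
         \<and> \<not> (\<exists>x \<in> ancestors par V w \<inter> R. vars par V lab x \<subseteq> Zq)
      then 1 else 0)"

definition EI :: "('v \<Rightarrow> 'v option) \<Rightarrow> 'v set \<Rightarrow> ('v \<Rightarrow> 'x) \<Rightarrow> 'q set \<Rightarrow> ('q \<Rightarrow> real)
     \<Rightarrow> ('q \<Rightarrow> 'x set) \<Rightarrow> 'v \<Rightarrow> 'v set \<Rightarrow> real" where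
  "EI par V lab Q Pr Z w R = (\<Sum>q\<in>Q. Pr q * I_q par V lab (Z q) w R)"

definition total_cost :: "('v \<Rightarrow> 'v option) \<Rightarrow> 'v set \<Rightarrow> ('v \<Rightarrow> real) \<Rightarrow> 'v \<Rightarrow> real" where
  "total_cost par V c w = (\<Sum>x\<in>subtree par V w. c x)"

definition benefit :: "('v \<Rightarrow> 'v option) \<Rightarrow> 'v set \<Rightarrow> ('v \<Rightarrow> 'x) \<Rightarrow> 'q set \<Rightarrow> ('q \<Rightarrow> real)
     \<Rightarrow> ('q \<Rightarrow> 'x set) \<Rightarrow> ('v \<Rightarrow> real) \<Rightarrow> 'v set \<Rightarrow> real" where
  "benefit par V lab Q Pr Z c R =
     (\<Sum>w\<in>R. EI par V lab Q Pr Z w R * total_cost par V c w)"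

text \<open>Possible states of the greedy algorithm for a set function f on ground set V with
  budget k (any tie-breaking): start with the empty set; while card R < k add a node
  u in V - R maximizing f (R \<union> {u}) - f R.\<close>
inductive greedy_state :: "('v set \<Rightarrow> real) \<Rightarrow> 'v set \<Rightarrow> nat \<Rightarrow> 'v set \<Rightarrow> bool"
  for f V k where
  init: "greedy_state f V k {}"
| step: "\<lbrakk> greedy_state f V k R; card R < k; u \<in> V - R;
           \<forall>u' \<in> V - R. f (R \<union> {u'}) - f R \<le> f (R \<union> {u}) - f R \<rbrakk>
         \<Longrightarrow> greedy_state f V k (R \<union> {u})"

definition greedy_output :: "('v set \<Rightarrow> real) \<Rightarrow> 'v set \<Rightarrow> nat \<Rightarrow> 'v set \<Rightarrow> bool" where
  "greedy_output f V k R \<longleftrightarrow> greedy_state f V k R \<and> \<not> card R < k"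

end

(*
  For a query q, I_q(w, R) selects, among the members w of R with vars(w) \<subseteq> Z_q, exactly the
  topmost ones. Every node x lying below some such member has a unique topmost one above it, so
  expanding C(w) as a sum over the nodes below w gives
    B(R) = \<Sum>(q, x) \<in> Q \<times> V. Pr(q) c(x) [some w \<in> R with vars(w) \<subseteq> Z_q lies above x],
  a weighted coverage function. Coverage functions with nonnegative weights are monotone and
  submodular, and for those the greedy algorithm satisfies
    max - B(R_g) \<le> (1 - 1/k)^k max \<le> max / e.
*)

theory Submission imports Defs begin

subsection \<open>Ancestor chains in a rooted tree\<close>

lemma tree_edges_parent_unique:
  "(p, v) \<in> tree_edges par V \<Longrightarrow> (p', v) \<in> tree_edges par V \<Longrightarrow> p = p'"
  by (auto simp: tree_edges_def)

lemma tree_edges_rtrancl_comparable: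
  assumes "(a, x) \<in> (tree_edges par V)\<^sup>*" and "(b, x) \<in> (tree_edges par V)\<^sup>*"
  shows "(a, b) \<in> (tree_edges par V)\<^sup>* \<or> (b, a) \<in> (tree_edges par V)\<^sup>*"
  using assms
proof (induction arbitrary: b rule: rtrancl_induct)
  case base
  then show ?case by simp
next
  case (step y z)
  from step.prems show ?case
  proof (cases rule: rtranclE)
    case base
    then show ?thesis using step.hyps by auto
  next
    case (step y')
    then have "y' = y" using tree_edges_parent_unique \<open>(y, z) \<in> tree_edges par V\<close> by metis
    then show ?thesis using step step.IH by auto
  qed
qed

lemma tree_edges_rtrancl_in_V:
  "(w, x) \<in> (tree_edges par V)\<^sup>* \<Longrightarrow> w \<in> V \<Longrightarrow> x \<in> V"
  by (erule rtranclE) (auto simp: tree_edges_def)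

lemma tree_edges_no_cycle_below_root:
  assumes "par r = None" and "(r, v) \<in> (tree_edges par V)\<^sup>*"
  shows "(v, v) \<notin> (tree_edges par V)\<^sup>+"
  using assms(2)
proof (induction rule: rtrancl_induct)
  case base
  show ?case
  proof
    assume "(r, r) \<in> (tree_edges par V)\<^sup>+"
    then obtain p where "(p, r) \<in> tree_edges par V" using tranclD2 by metis
    then show False using assms(1) by (auto simp: tree_edges_def)
  qed
next
  case (step y z)
  show ?case
  proof
    assume "(z, z) \<in> (tree_edges par V)\<^sup>+"
    then obtain p where p: "(z, p) \<in> (tree_edges par V)\<^sup>*" "(p, z) \<in> tree_edges par V"
      using tranclD2 by metis
    then have "p = y" using tree_edges_parent_unique step.hyps(2) by metis
    then have "(y, y) \<in> (tree_edges par V)\<^sup>+" using p step.hyps(2)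
      by (meson rtrancl_into_trancl2)
    then show False using step.IH by simp
  qed
qed

lemma rooted_tree_wf_tree_edges:
  assumes "rooted_tree par V r"
  shows "wf (tree_edges par V)"
proof (rule finite_acyclic_wf)
  have root: "par r = None" and has_parent: "\<forall>v \<in> V - {r}. \<exists>p \<in> V. par v = Some p"
    and reachable: "\<forall>v \<in> V. (r, v) \<in> (tree_edges par V)\<^sup>*" and "finite V"
    using assms by (simp_all add: rooted_tree_def)
  have "tree_edges par V \<subseteq> V \<times> V"
  proof (clarsimp simp: tree_edges_def)
    fix p v
    assume "v \<in> V" "par v = Some p"
    moreover from this root have "v \<noteq> r" by auto
    ultimately obtain p' where "p' \<in> V" "par v = Some p'" using has_parent by blast
    with \<open>par v = Some p\<close> show "p \<in> V" by simp
  qed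
  then show "finite (tree_edges par V)"
    using \<open>finite V\<close> finite_subset by blast
  show "acyclic (tree_edges par V)"
    unfolding acyclic_def
  proof
    fix v
    show "(v, v) \<notin> (tree_edges par V)\<^sup>+"
    proof
      assume cycle: "(v, v) \<in> (tree_edges par V)\<^sup>+"
      then obtain p where "(p, v) \<in> tree_edges par V" using tranclD2 by metis
      then have "v \<in> V" by (simp add: tree_edges_def)
      with reachable have "(r, v) \<in> (tree_edges par V)\<^sup>*" by blast
      with root cycle show False by (simp add: tree_edges_no_cycle_below_root)
    qed
  qed
qed

lemma topmost_ancestor_exists:
  assumes "wf (tree_edges par V)" and "w \<in> R" "G w" "(w, x) \<in> (tree_edges par V)\<^sup>*"
  obtains t where "t \<in> R" "G t" "(t, x) \<in> (tree_edges par V)\<^sup>*"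
    "\<not> (\<exists>a \<in> ancestors par V t \<inter> R. G a)"
proof -
  let ?S = "{w \<in> R. G w \<and> (w, x) \<in> (tree_edges par V)\<^sup>*}"
  have "w \<in> ?S" using assms(2-4) by simp
  then obtain t where "t \<in> ?S"
    and min: "\<And>a. (a, t) \<in> (tree_edges par V)\<^sup>+ \<Longrightarrow> a \<notin> ?S"
    by (rule wfE_min[OF wf_trancl[OF assms(1)]]) blast
  then have t: "t \<in> R" "G t" "(t, x) \<in> (tree_edges par V)\<^sup>*" by simp_all
  have "\<not> (\<exists>a \<in> ancestors par V t \<inter> R. G a)"
  proof
    assume "\<exists>a \<in> ancestors par V t \<inter> R. G a"
    then obtain a where a: "a \<in> R" "G a" "(a, t) \<in> (tree_edges par V)\<^sup>+"
      unfolding ancestors_def by blast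
    from a(3) t(3) have "(a, x) \<in> (tree_edges par V)\<^sup>*"
      by (rule rtrancl_trans[OF trancl_into_rtrancl])
    with a(1,2) min[OF a(3)] show False by simp
  qed
  with t that show thesis by blast
qed

lemma topmost_ancestor_unique:
  assumes "s \<in> R" "G s" "(s, x) \<in> (tree_edges par V)\<^sup>*" "\<not> (\<exists>a \<in> ancestors par V s \<inter> R. G a)"
    and "t \<in> R" "G t" "(t, x) \<in> (tree_edges par V)\<^sup>*" "\<not> (\<exists>a \<in> ancestors par V t \<inter> R. G a)"
  shows "s = t"
proof -
  have "\<not> (s, t) \<in> (tree_edges par V)\<^sup>+" "\<not> (t, s) \<in> (tree_edges par V)\<^sup>+"
    using assms by (auto simp: ancestors_def)
  then show ?thesis
    using tree_edges_rtrancl_comparable[OF assms(3,7)] by (auto dest: rtranclD)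
qed

lemma sum_topmost_ancestor_indicator:
  assumes "wf (tree_edges par V)" and "finite R"
  shows "(\<Sum>w\<in>R. of_bool (G w \<and> \<not> (\<exists>a \<in> ancestors par V w \<inter> R. G a)
                             \<and> (w, x) \<in> (tree_edges par V)\<^sup>*))
       = (of_bool (\<exists>w\<in>R. G w \<and> (w, x) \<in> (tree_edges par V)\<^sup>*) :: real)"
proof (cases "\<exists>w\<in>R. G w \<and> (w, x) \<in> (tree_edges par V)\<^sup>*")
  case True
  then obtain w where "w \<in> R" "G w" "(w, x) \<in> (tree_edges par V)\<^sup>*" by blast
  then obtain t where t: "t \<in> R" "G t" "(t, x) \<in> (tree_edges par V)\<^sup>*"
    "\<not> (\<exists>a \<in> ancestors par V t \<inter> R. G a)"
    by (rule topmost_ancestor_exists[OF assms(1)])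
  have "(G w \<and> \<not> (\<exists>a \<in> ancestors par V w \<inter> R. G a) \<and> (w, x) \<in> (tree_edges par V)\<^sup>*)
      \<longleftrightarrow> w = t" if "w \<in> R" for w
    using topmost_ancestor_unique[OF that _ _ _ t] t by blast
  then have "(\<Sum>w\<in>R. of_bool (G w \<and> \<not> (\<exists>a \<in> ancestors par V w \<inter> R. G a)
                             \<and> (w, x) \<in> (tree_edges par V)\<^sup>*)) = (\<Sum>w\<in>R. of_bool (w = t) :: real)"
    by (intro sum.cong) simp_all
  also have "\<dots> = 1"
    using assms(2) t(1) by simp
  finally show ?thesis using True by simp
next
  case False
  then show ?thesis by (simp add: sum.neutral)
qed

subsection \<open>Monotone submodular set functions and the greedy algorithm\<close>

definition submodular_on :: "'a set \<Rightarrow> ('a set \<Rightarrow> real) \<Rightarrow> bool" where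
  "submodular_on V f \<longleftrightarrow>
     (\<forall>A B u. A \<subseteq> B \<longrightarrow> B \<subseteq> V \<longrightarrow> u \<in> V \<longrightarrow> f (B \<union> {u}) - f B \<le> f (A \<union> {u}) - f A)"

lemma submodular_onD:
  "submodular_on V f \<Longrightarrow> A \<subseteq> B \<Longrightarrow> B \<subseteq> V \<Longrightarrow> u \<in> V
    \<Longrightarrow> f (B \<union> {u}) - f B \<le> f (A \<union> {u}) - f A"
  by (simp add: submodular_on_def)

lemma submodular_on_union_le_sum:
  assumes "submodular_on V f" and "finite B" "R \<subseteq> V" "B \<subseteq> V"
  shows "f (R \<union> B) - f R \<le> (\<Sum>u\<in>B. f (R \<union> {u}) - f R)"
  using assms(2,4)
proof (induction B rule: finite_induct)
  case (insert b B)
  have "f (R \<union> B \<union> {b}) - f (R \<union> B) \<le> f (R \<union> {b}) - f R"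
    by (rule submodular_onD[OF assms(1)]) (use assms(3) insert.prems in auto)
  moreover have "f (R \<union> B) - f R \<le> (\<Sum>u\<in>B. f (R \<union> {u}) - f R)"
    using insert.IH insert.prems by simp
  moreover have "R \<union> insert b B = R \<union> B \<union> {b}" by auto
  ultimately show ?case using insert.hyps by simp
qed simp

lemma greedy_state_subset_card:
  assumes "greedy_state f V k R"
  shows "finite R \<and> R \<subseteq> V \<and> card R \<le> k"
  using assms
proof induction
  case (step R u)
  then show ?case by (simp add: card_insert_if)
qed simp

text \<open>Nemhauser, Wolsey and Fisher: by submodularity the gap f S - f R is at most the sum of
  the at most k marginal gains of the elements of S - R, so each greedy step closes at least a
  1/k fraction of it.\<close>

lemma greedy_state_gap:
  fixes f :: "'a set \<Rightarrow> real"
  assumes mono: "mono_on (Pow V) f" and sub: "submodular_on V f" and "0 < k"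
    and S: "S \<subseteq> V" "card S \<le> k" and "finite V"
    and "greedy_state f V k R"
  shows "f S - f R \<le> (1 - 1 / real k) ^ card R * (f S - f {})"
  using assms(7)
proof (induction rule: greedy_state.induct)
  case init
  then show ?case by simp
next
  case (step R u)
  from step.hyps(1) have R: "finite R" "R \<subseteq> V" using greedy_state_subset_card by blast+
  define d where "d = f (R \<union> {u}) - f R"
  have "f R \<le> f (R \<union> {u})"
    using R(2) step.hyps(3) by (intro mono_onD[OF mono]) auto
  then have "d \<ge> 0" by (simp add: d_def)
  have "finite (S - R)" "S - R \<subseteq> V"
    using S(1) \<open>finite V\<close> by (auto intro: finite_subset)
  have "card (S - R) \<le> k"
    using S \<open>finite V\<close> by (meson card_mono finite_subset Diff_subset order_trans)
  have "f S - f R \<le> f (R \<union> (S - R)) - f R"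
    using R(2) S(1) by (simp add: mono_onD[OF mono])
  also have "\<dots> \<le> (\<Sum>u'\<in>S - R. f (R \<union> {u'}) - f R)"
    by (rule submodular_on_union_le_sum[OF sub \<open>finite (S - R)\<close> R(2) \<open>S - R \<subseteq> V\<close>])
  also have "\<dots> \<le> (\<Sum>u'\<in>S - R. d)"
    by (rule sum_mono) (use step.hyps(4) S(1) in \<open>auto simp: d_def\<close>)
  also have "\<dots> \<le> real k * d"
    using \<open>card (S - R) \<le> k\<close> \<open>d \<ge> 0\<close> by (simp add: mult_right_mono)
  finally have "f S - f (R \<union> {u}) \<le> (1 - 1 / real k) * (f S - f R)"
    using \<open>0 < k\<close> by (simp add: d_def field_simps)
  also have "\<dots> \<le> (1 - 1 / real k) * ((1 - 1 / real k) ^ card R * (f S - f {}))"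
    using step.IH \<open>0 < k\<close> by (intro mult_left_mono) auto
  also have "\<dots> = (1 - 1 / real k) ^ card (R \<union> {u}) * (f S - f {})"
    using step.hyps(3) R(1) by simp
  finally show ?case .
qed

lemma greedy_output_approximation:
  fixes f :: "'a set \<Rightarrow> real"
  assumes mono: "mono_on (Pow V) f" and sub: "submodular_on V f" and "0 \<le> f {}" and "0 < k"
    and S: "S \<subseteq> V" "card S \<le> k" and "finite V"
    and "greedy_output f V k R"
  shows "(1 - 1 / exp 1) * f S \<le> f R"
proof -
  from assms(8) have R: "greedy_state f V k R" and "\<not> card R < k"
    by (simp_all add: greedy_output_def)
  with greedy_state_subset_card have "card R = k" by (meson le_neq_implies_less)
  with greedy_state_gap[OF mono sub \<open>0 < k\<close> S \<open>finite V\<close> R]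
  have "f S - f R \<le> (1 - 1 / real k) ^ k * (f S - f {})" by simp
  also have "\<dots> \<le> exp (- 1) * (f S - f {})"
  proof (rule mult_right_mono)
    show "(1 - 1 / real k) ^ k \<le> exp (- 1)"
      using exp_ge_one_minus_x_over_n_power_n[of 1 k] \<open>0 < k\<close> by simp
    show "0 \<le> f S - f {}" using S(1) by (simp add: mono_onD[OF mono])
  qed
  also have "\<dots> \<le> exp (- 1) * f S" using \<open>0 \<le> f {}\<close> by simp
  finally show ?thesis by (simp add: exp_minus inverse_eq_divide algebra_simps)
qed

subsection \<open>The benefit is a weighted coverage function\<close>

definition coverage :: "('a \<Rightarrow> real) \<Rightarrow> 'a set \<Rightarrow> ('a \<Rightarrow> 'b \<Rightarrow> bool) \<Rightarrow> 'b set \<Rightarrow> real" where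
  "coverage wt A P R = (\<Sum>a\<in>A. wt a * of_bool (\<exists>w\<in>R. P a w))"

lemma coverage_mono:
  assumes "\<forall>a\<in>A. wt a \<ge> 0" and "R \<subseteq> S"
  shows "coverage wt A P R \<le> coverage wt A P S"
  unfolding coverage_def
proof (rule sum_mono)
  fix a assume "a \<in> A"
  have "of_bool (\<exists>w\<in>R. P a w) \<le> (of_bool (\<exists>w\<in>S. P a w) :: real)"
    using \<open>R \<subseteq> S\<close> by (intro of_bool_less_eq_iff[THEN iffD2]) blast
  moreover have "0 \<le> wt a" using assms(1) \<open>a \<in> A\<close> by blast
  ultimately show "wt a * of_bool (\<exists>w\<in>R. P a w) \<le> wt a * of_bool (\<exists>w\<in>S. P a w)"
    by (rule mult_left_mono)
qed

lemma coverage_insert_diff: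
  "coverage wt A P (R \<union> {u}) - coverage wt A P R
    = (\<Sum>a\<in>A. wt a * of_bool (P a u \<and> \<not> (\<exists>w\<in>R. P a w)))"
  unfolding coverage_def sum_subtractf[symmetric]
  by (intro sum.cong refl) (simp add: of_bool_def)

lemma coverage_submodular:
  assumes "\<forall>a\<in>A. wt a \<ge> 0" and "R \<subseteq> S"
  shows "coverage wt A P (S \<union> {u}) - coverage wt A P S
    \<le> coverage wt A P (R \<union> {u}) - coverage wt A P R"
  unfolding coverage_insert_diff
proof (rule sum_mono)
  fix a assume "a \<in> A"
  have "of_bool (P a u \<and> \<not> (\<exists>w\<in>S. P a w)) \<le> (of_bool (P a u \<and> \<not> (\<exists>w\<in>R. P a w)) :: real)"
    using \<open>R \<subseteq> S\<close> by (intro of_bool_less_eq_iff[THEN iffD2]) blast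
  moreover have "0 \<le> wt a" using assms(1) \<open>a \<in> A\<close> by blast
  ultimately show "wt a * of_bool (P a u \<and> \<not> (\<exists>w\<in>S. P a w))
      \<le> wt a * of_bool (P a u \<and> \<not> (\<exists>w\<in>R. P a w))"
    by (rule mult_left_mono)
qed

lemma total_cost_eq_sum_descendants:
  assumes "rooted_tree par V r" and "w \<in> V"
  shows "total_cost par V c w = (\<Sum>x\<in>V. c x * of_bool ((w, x) \<in> (tree_edges par V)\<^sup>*))"
proof -
  have "subtree par V w = {x \<in> V. (w, x) \<in> (tree_edges par V)\<^sup>*}"
    unfolding subtree_def using tree_edges_rtrancl_in_V[OF _ assms(2)] by blast
  moreover have "finite V" using assms(1) by (simp add: rooted_tree_def)
  ultimately show ?thesis by (simp add: total_cost_def Collect_conj_eq)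
qed

lemma sum_I_q_mult_descendant:
  assumes "wf (tree_edges par V)" and "finite R"
  shows "(\<Sum>w\<in>R. I_q par V lab Zq w R * of_bool ((w, x) \<in> (tree_edges par V)\<^sup>*))
    = (of_bool (\<exists>w\<in>R. vars par V lab w \<subseteq> Zq \<and> (w, x) \<in> (tree_edges par V)\<^sup>*) :: real)"
proof -
  have "I_q par V lab Zq w R * of_bool ((w, x) \<in> (tree_edges par V)\<^sup>*)
      = of_bool (vars par V lab w \<subseteq> Zq \<and> \<not> (\<exists>a \<in> ancestors par V w \<inter> R. vars par V lab a \<subseteq> Zq)
                 \<and> (w, x) \<in> (tree_edges par V)\<^sup>*)" if "w \<in> R" for w
    using that by (simp add: I_q_def)
  then have "(\<Sum>w\<in>R. I_q par V lab Zq w R * of_bool ((w, x) \<in> (tree_edges par V)\<^sup>*))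
      = (\<Sum>w\<in>R. of_bool (vars par V lab w \<subseteq> Zq
            \<and> \<not> (\<exists>a \<in> ancestors par V w \<inter> R. vars par V lab a \<subseteq> Zq)
            \<and> (w, x) \<in> (tree_edges par V)\<^sup>*))"
    by (rule sum.cong[OF refl])
  also have "\<dots> = of_bool (\<exists>w\<in>R. vars par V lab w \<subseteq> Zq \<and> (w, x) \<in> (tree_edges par V)\<^sup>*)"
    by (rule sum_topmost_ancestor_indicator[OF assms])
  finally show ?thesis .
qed

lemma benefit_eq_coverage:
  assumes tree: "rooted_tree par V r" and "R \<subseteq> V"
  shows "benefit par V lab Q Pr Z c R = coverage (\<lambda>(q, x). Pr q * c x) (Q \<times> V)
      (\<lambda>(q, x) w. vars par V lab w \<subseteq> Z q \<and> (w, x) \<in> (tree_edges par V)\<^sup>*) R"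
proof -
  let ?I = "\<lambda>q w. I_q par V lab (Z q) w R"
  let ?below = "\<lambda>w x. of_bool ((w, x) \<in> (tree_edges par V)\<^sup>*) :: real"
  have "finite R"
    using assms by (meson finite_subset rooted_tree_def)
  have "benefit par V lab Q Pr Z c R = (\<Sum>w\<in>R. \<Sum>q\<in>Q. \<Sum>x\<in>V. Pr q * c x * (?I q w * ?below w x))"
    unfolding benefit_def EI_def
  proof (rule sum.cong[OF refl])
    fix w assume "w \<in> R"
    then have "(\<Sum>q\<in>Q. Pr q * ?I q w) * total_cost par V c w
        = (\<Sum>q\<in>Q. \<Sum>x\<in>V. (Pr q * ?I q w) * (c x * ?below w x))"
      using total_cost_eq_sum_descendants[OF tree] assms(2) by (auto simp only: sum_product)
    also have "\<dots> = (\<Sum>q\<in>Q. \<Sum>x\<in>V. Pr q * c x * (?I q w * ?below w x))"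
      by (intro sum.cong refl) (simp only: mult_ac)
    finally show "(\<Sum>q\<in>Q. Pr q * ?I q w) * total_cost par V c w
        = (\<Sum>q\<in>Q. \<Sum>x\<in>V. Pr q * c x * (?I q w * ?below w x))" .
  qed
  also have "\<dots> = (\<Sum>q\<in>Q. \<Sum>x\<in>V. Pr q * c x * (\<Sum>w\<in>R. ?I q w * ?below w x))"
    by (simp only: sum.swap[of _ R] sum_distrib_left)
  also have "\<dots> = (\<Sum>q\<in>Q. \<Sum>x\<in>V. Pr q * c x *
      of_bool (\<exists>w\<in>R. vars par V lab w \<subseteq> Z q \<and> (w, x) \<in> (tree_edges par V)\<^sup>*))"
    by (simp only: sum_I_q_mult_descendant[OF rooted_tree_wf_tree_edges[OF tree] \<open>finite R\<close>])
  also have "\<dots> = coverage (\<lambda>(q, x). Pr q * c x) (Q \<times> V)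
      (\<lambda>(q, x) w. vars par V lab w \<subseteq> Z q \<and> (w, x) \<in> (tree_edges par V)\<^sup>*) R"
    unfolding coverage_def sum.cartesian_product by (rule sum.cong) auto
  finally show ?thesis .
qed

lemma benefit_mono_on:
  assumes tree: "rooted_tree par V r" and "\<forall>q \<in> Q. Pr q \<ge> 0" and "\<forall>x \<in> V. c x \<ge> 0"
  shows "mono_on (Pow V) (benefit par V lab Q Pr Z c)"
proof (rule mono_onI)
  fix R S assume "R \<in> Pow V" "S \<in> Pow V" "R \<le> S"
  moreover have "\<forall>a \<in> Q \<times> V. (\<lambda>(q, x). Pr q * c x) a \<ge> 0"
    using assms(2,3) by auto
  ultimately show "benefit par V lab Q Pr Z c R \<le> benefit par V lab Q Pr Z c S"
    by (simp add: benefit_eq_coverage[OF tree] coverage_mono)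
qed

lemma benefit_submodular_on:
  assumes tree: "rooted_tree par V r" and "\<forall>q \<in> Q. Pr q \<ge> 0" and "\<forall>x \<in> V. c x \<ge> 0"
  shows "submodular_on V (benefit par V lab Q Pr Z c)"
  unfolding submodular_on_def
proof (intro allI impI)
  fix A B u assume "A \<subseteq> B" "B \<subseteq> V" "u \<in> V"
  then have "A \<subseteq> V" "A \<union> {u} \<subseteq> V" "B \<union> {u} \<subseteq> V" by auto
  moreover have "\<forall>a \<in> Q \<times> V. (\<lambda>(q, x). Pr q * c x) a \<ge> 0"
    using assms(2,3) by auto
  ultimately show "benefit par V lab Q Pr Z c (B \<union> {u}) - benefit par V lab Q Pr Z c B
      \<le> benefit par V lab Q Pr Z c (A \<union> {u}) - benefit par V lab Q Pr Z c A"
    using \<open>A \<subseteq> B\<close> \<open>B \<subseteq> V\<close>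
    by (simp only: benefit_eq_coverage[OF tree] coverage_submodular)
qed

theorem theorem3:
  fixes par :: "'v \<Rightarrow> 'v option" and V :: "'v set" and r :: 'v
    and X :: "'x set" and lab :: "'v \<Rightarrow> 'x"
    and Q :: "'q set" and Pr :: "'q \<Rightarrow> real" and Z :: "'q \<Rightarrow> 'x set"
    and c :: "'v \<Rightarrow> real" and k :: nat and Rg :: "'v set"
  assumes tree: "rooted_tree par V r"
    and X_fin: "finite X"
    and lab_X: "\<forall>w \<in> V. \<not> is_leaf par V w \<longrightarrow> lab w \<in> X"
    and Z_X: "\<forall>q \<in> Q. Z q \<subseteq> X"
    and Q_fin: "finite Q"
    and Pr_nonneg: "\<forall>q \<in> Q. Pr q \<ge> 0"
    and Pr_sum: "(\<Sum>q\<in>Q. Pr q) = 1"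
    and c_nonneg: "\<forall>x \<in> V. c x \<ge> 0"
    and k_pos: "0 < k" and k_le: "k \<le> card V"
    and greedy: "greedy_output (benefit par V lab Q Pr Z c) V k Rg"
  shows "benefit par V lab Q Pr Z c Rg \<ge>
           (1 - 1 / exp 1) * Max {benefit par V lab Q Pr Z c R | R. R \<subseteq> V \<and> card R \<le> k}"
proof -
  let ?f = "benefit par V lab Q Pr Z c"
  let ?M = "{?f R | R. R \<subseteq> V \<and> card R \<le> k}"
  have "finite V" using tree by (simp add: rooted_tree_def)
  then have "Max ?M \<in> ?M" by (intro Max_in) auto
  then obtain S where S: "S \<subseteq> V" "card S \<le> k" and max: "Max ?M = ?f S" by auto
  have "0 \<le> ?f {}" by (simp add: benefit_def)
  from greedy_output_approximation[OF benefit_mono_on[OF tree Pr_nonneg c_nonneg]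
      benefit_submodular_on[OF tree Pr_nonneg c_nonneg] this k_pos S \<open>finite V\<close> greedy]
  show ?thesis unfolding max .
qed

end
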